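(* Let $M=\mathbb{S}^1\times[-\rho,\rho]$ carry a metric of the form $ds^2=d\sigma^2+f(\theta,\sigma)^2d\theta^2$, $f>0$ smooth, and suppose there are constants $\alpha>0$, $C\ge0$ with $R\ge-\alpha$ on $M$ and $|k_g|\le C$ on $\partial M$. Let $L$ be the minimum of the lengths of the two boundary components. Then the area $A(M)$ satisfies $$2\rho L e^{-2\rho(\alpha\rho+C)}\le A(M)\le 2\rho L e^{2\rho(\alpha\rho+C)}.$$
   Context: $R$ is the scalar curvature (twice the Gauss curvature) of the metric and $k_g$ the geodesic curvature of the boundary curves $\mathbb{S}^1\times\{\pm\rho\}$; $\theta\in[0,2\pi)$, $\sigma\in[-\rho,\rho]$. *)

theory Defs
  imports "HOL-Analysis.Analysis"
begin

text \<open>Points of the (universal cover of the) cylinder are pairs (theta, sigma).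
  A metric ds^2 = dsigma^2 + f(theta,sigma)^2 dtheta^2 is given by the
  function f :: real * real => real, 2pi-periodic in theta.\<close>

definition pd1 :: "(real \<times> real \<Rightarrow> real) \<Rightarrow> real \<times> real \<Rightarrow> real" where
  "pd1 g z = deriv (\<lambda>t. g (t, snd z)) (fst z)"

definition pd2 :: "(real \<times> real \<Rightarrow> real) \<Rightarrow> real \<times> real \<Rightarrow> real" where
  "pd2 g z = deriv (\<lambda>t. g (fst z, t)) (snd z)"

text \<open>C^k on a set U (meant for open U): partial derivatives of all orders up to k
  exist and are continuous.\<close>
fun Ck_on :: "nat \<Rightarrow> (real \<times> real) set \<Rightarrow> (real \<times> real \<Rightarrow> real) \<Rightarrow> bool" where
  "Ck_on 0 U g = continuous_on U g"
| "Ck_on (Suc k) U g =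
     (continuous_on U g \<and>
      (\<forall>z\<in>U. (\<lambda>t. g (t, snd z)) differentiable (at (fst z)) \<and>
              (\<lambda>t. g (fst z, t)) differentiable (at (snd z))) \<and>
      Ck_on k U (pd1 g) \<and> Ck_on k U (pd2 g))"

definition smooth_on :: "(real \<times> real) set \<Rightarrow> (real \<times> real \<Rightarrow> real) \<Rightarrow> bool" where
  "smooth_on U g \<longleftrightarrow> (\<forall>k. Ck_on k U g)"

definition smooth_on_strip :: "real \<Rightarrow> (real \<times> real \<Rightarrow> real) \<Rightarrow> bool" where
  "smooth_on_strip \<rho> g \<longleftrightarrow>
     (\<exists>U. open U \<and> UNIV \<times> {-\<rho>..\<rho>} \<subseteq> U \<and> smooth_on U g)"

text \<open>Scalar curvature (twice the Gauss curvature K = - f_sigma sigma / f).\<close>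
definition scal_curv :: "(real \<times> real \<Rightarrow> real) \<Rightarrow> real \<times> real \<Rightarrow> real" where
  "scal_curv f z = - 2 * pd2 (pd2 f) z / f z"

text \<open>Geodesic curvature of the curve sigma = const (parametrised in theta, unit normal
  d/dsigma): f_sigma / f. Only its absolute value is used, so the orientation
  convention on the boundary is immaterial.\<close>
definition geod_curv :: "(real \<times> real \<Rightarrow> real) \<Rightarrow> real \<times> real \<Rightarrow> real" where
  "geod_curv f z = pd2 f z / f z"

definition curve_length :: "(real \<times> real \<Rightarrow> real) \<Rightarrow> real \<Rightarrow> real" where
  "curve_length f s = integral {0..2*pi} (\<lambda>\<theta>. f (\<theta>, s))"

definition area :: "real \<Rightarrow> (real \<times> real \<Rightarrow> real) \<Rightarrow> real" where
  "area \<rho> f = integral ({0..2*pi} \<times> {-\<rho>..\<rho>}) f"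

end

theory Submission
  imports Defs
begin

text \<open>Fix \<theta> and put h(\<sigma>) = f(\<theta>, \<sigma>). The curvature bound R = -2h''/h \<ge> -\<alpha> says h'' \<le> (\<alpha>/2) h,
  so the logarithmic derivative w = h'/h satisfies the Riccati inequality w' = h''/h - w^2 \<le> \<alpha>/2.
  Since |w| \<le> C at both ends \<sigma> = \<plusminus>\<rho> (geodesic curvature bound), integrating w' \<le> \<alpha>/2 from either end
  gives |w| \<le> C + \<alpha>\<rho> on the whole interval. Hence ln h is (C + \<alpha>\<rho>)-Lipschitz, and h(\<sigma>) lies within
  a factor exp(2\<rho>(\<alpha>\<rho> + C)) of its boundary values h(\<plusminus>\<rho>). Integrating over the rectangle
  [0, 2\<pi>] \<times> [-\<rho>, \<rho>] compares the area with 2\<rho> times the length of either boundary curve.\<close>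

lemma abs_diff_le_of_DERIV_abs_bound:
  fixes g g' :: "real \<Rightarrow> real"
  assumes deriv: "\<And>t. t \<in> {a..b} \<Longrightarrow> (g has_real_derivative g' t) (at t)"
    and bound: "\<And>t. t \<in> {a..b} \<Longrightarrow> \<bar>g' t\<bar> \<le> M"
    and x: "x \<in> {a..b}" and y: "y \<in> {a..b}"
  shows "\<bar>g y - g x\<bar> \<le> M * \<bar>y - x\<bar>"
proof -
  have "g v - g u \<le> M * (v - u) \<and> g u - g v \<le> M * (v - u)"
    if "u \<le> v" "u \<in> {a..b}" "v \<in> {a..b}" for u v
  proof
    have "g v - M * v \<le> g u - M * u"
    proof (rule DERIV_nonpos_imp_nonincreasing[OF \<open>u \<le> v\<close>])
      fix t assume "u \<le> t" "t \<le> v"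
      with that have t: "t \<in> {a..b}" by auto
      show "\<exists>y. ((\<lambda>t. g t - M * t) has_real_derivative y) (at t) \<and> y \<le> 0"
        using deriv[OF t] bound[OF t] by (auto intro!: derivative_eq_intros simp: abs_le_iff)
    qed
    then show "g v - g u \<le> M * (v - u)" by (simp add: algebra_simps)
    have "g u + M * u \<le> g v + M * v"
    proof (rule DERIV_nonneg_imp_nondecreasing[OF \<open>u \<le> v\<close>])
      fix t assume "u \<le> t" "t \<le> v"
      with that have t: "t \<in> {a..b}" by auto
      show "\<exists>y. ((\<lambda>t. g t + M * t) has_real_derivative y) (at t) \<and> y \<ge> 0"
        using deriv[OF t] bound[OF t] by (auto intro!: derivative_eq_intros simp: abs_le_iff)
    qed
    then show "g u - g v \<le> M * (v - u)" by (simp add: algebra_simps)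
  qed
  from this[of x y] this[of y x] x y show ?thesis
    by (cases "x \<le> y") (auto simp: abs_le_iff)
qed

lemma abs_le_of_DERIV_upper_bound:
  fixes w w' :: "real \<Rightarrow> real"
  assumes deriv: "\<And>t. t \<in> {a..b} \<Longrightarrow> (w has_real_derivative w' t) (at t)"
    and upper: "\<And>t. t \<in> {a..b} \<Longrightarrow> w' t \<le> c" and "c \<ge> 0"
    and left: "\<bar>w a\<bar> \<le> B" and right: "\<bar>w b\<bar> \<le> B"
    and x: "x \<in> {a..b}"
  shows "\<bar>w x\<bar> \<le> B + c * (b - a)"
proof -
  have mono: "w v - c * v \<le> w u - c * u" if "u \<le> v" "u \<in> {a..b}" "v \<in> {a..b}" for u v
  proof (rule DERIV_nonpos_imp_nonincreasing[OF \<open>u \<le> v\<close>])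
    fix t assume "u \<le> t" "t \<le> v"
    with that have t: "t \<in> {a..b}" by auto
    show "\<exists>y. ((\<lambda>t. w t - c * t) has_real_derivative y) (at t) \<and> y \<le> 0"
      using deriv[OF t] upper[OF t] by (auto intro!: derivative_eq_intros)
  qed
  from x have "c * (x - a) \<le> c * (b - a)" "c * (b - x) \<le> c * (b - a)"
    using \<open>c \<ge> 0\<close> by (auto intro: mult_left_mono)
  with mono[of a x] mono[of x b] x left right show ?thesis
    by (auto simp: abs_le_iff algebra_simps)
qed

lemma positive_subsolution_growth_bound:
  fixes h h' h'' :: "real \<Rightarrow> real"
  assumes deriv: "\<And>t. t \<in> {a..b} \<Longrightarrow> (h has_real_derivative h' t) (at t)"
    and deriv2: "\<And>t. t \<in> {a..b} \<Longrightarrow> (h' has_real_derivative h'' t) (at t)"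
    and pos: "\<And>t. t \<in> {a..b} \<Longrightarrow> h t > 0"
    and subsolution: "\<And>t. t \<in> {a..b} \<Longrightarrow> h'' t \<le> c * h t" and "c \<ge> 0"
    and left: "\<bar>h' a / h a\<bar> \<le> B" and right: "\<bar>h' b / h b\<bar> \<le> B"
    and x: "x \<in> {a..b}" and y: "y \<in> {a..b}"
  shows "h y \<le> h x * exp ((B + c * (b - a)) * \<bar>y - x\<bar>)"
proof -
  define M where "M = B + c * (b - a)"
  have log_deriv_bound: "\<bar>h' t / h t\<bar> \<le> M" if "t \<in> {a..b}" for t
    unfolding M_def
  proof (rule abs_le_of_DERIV_upper_bound[OF _ _ \<open>c \<ge> 0\<close> left right that])
    fix u assume u: "u \<in> {a..b}"
    show "((\<lambda>t. h' t / h t) has_real_derivative h'' u / h u - (h' u / h u)\<^sup>2) (at u)"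
      using deriv[OF u] deriv2[OF u] pos[OF u]
      by (auto intro!: derivative_eq_intros simp: field_simps power2_eq_square)
    have "h'' u / h u \<le> c"
      using subsolution[OF u] pos[OF u] by (simp add: divide_le_eq)
    then show "h'' u / h u - (h' u / h u)\<^sup>2 \<le> c"
      by (smt (verit) zero_le_power2)
  qed
  have "\<bar>ln (h y) - ln (h x)\<bar> \<le> M * \<bar>y - x\<bar>"
  proof (rule abs_diff_le_of_DERIV_abs_bound[OF _ log_deriv_bound x y])
    fix t assume "t \<in> {a..b}"
    then show "((\<lambda>t. ln (h t)) has_real_derivative h' t / h t) (at t)"
      using deriv pos by (auto intro!: derivative_eq_intros simp: field_simps)
  qed
  then have "ln (h y) \<le> ln (h x) + M * \<bar>y - x\<bar>" by simp
  then have "exp (ln (h y)) \<le> exp (ln (h x) + M * \<bar>y - x\<bar>)" by simp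
  then show ?thesis
    using pos x y by (simp add: exp_add M_def)
qed

lemma smooth_on_strip_continuous_on:
  assumes "smooth_on_strip \<rho> f"
  shows "continuous_on (UNIV \<times> {-\<rho>..\<rho>}) f"
proof -
  obtain U where "UNIV \<times> {-\<rho>..\<rho>} \<subseteq> U" "Ck_on 0 U f"
    using assms unfolding smooth_on_strip_def smooth_on_def by blast
  then show ?thesis by (auto intro: continuous_on_subset)
qed

lemma smooth_on_strip_has_pd2_derivatives:
  assumes "smooth_on_strip \<rho> f" and "\<sigma> \<in> {-\<rho>..\<rho>}"
  shows "((\<lambda>t. f (\<theta>, t)) has_real_derivative pd2 f (\<theta>, \<sigma>)) (at \<sigma>)"
    and "((\<lambda>t. pd2 f (\<theta>, t)) has_real_derivative pd2 (pd2 f) (\<theta>, \<sigma>)) (at \<sigma>)"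
proof -
  obtain U where "UNIV \<times> {-\<rho>..\<rho>} \<subseteq> U" "Ck_on 2 U f"
    using assms(1) unfolding smooth_on_strip_def smooth_on_def by blast
  moreover have "(\<theta>, \<sigma>) \<in> UNIV \<times> {-\<rho>..\<rho>}" using assms(2) by simp
  ultimately have "(\<lambda>t. f (\<theta>, t)) differentiable (at \<sigma>)"
    and "(\<lambda>t. pd2 f (\<theta>, t)) differentiable (at \<sigma>)"
    by (simp_all add: numeral_2_eq_2 subset_iff) (metis fst_conv snd_conv)+
  then show "((\<lambda>t. f (\<theta>, t)) has_real_derivative pd2 f (\<theta>, \<sigma>)) (at \<sigma>)"
    and "((\<lambda>t. pd2 f (\<theta>, t)) has_real_derivative pd2 (pd2 f) (\<theta>, \<sigma>)) (at \<sigma>)"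
    by (simp_all add: pd2_def DERIV_deriv_iff_real_differentiable)
qed

lemma integral_rectangle_fst:
  fixes g :: "real \<Rightarrow> real"
  assumes "continuous_on {a..b} g" and "c \<le> d"
  shows "integral ({a..b} \<times> {c..d}) (\<lambda>z. g (fst z)) = (d - c) * integral {a..b} g"
proof -
  have "continuous_on (cbox (a, c) (b, d)) (\<lambda>z. g (fst z))"
    by (rule continuous_on_compose2[OF assms(1) continuous_on_fst[OF continuous_on_id]])
       (auto simp: cbox_Pair_eq)
  then have "integral (cbox (a, c) (b, d)) (\<lambda>z. g (fst z))
      = integral (cbox a b) (\<lambda>x. integral (cbox c d) (\<lambda>y. g x))"
    by (simp add: integral_prod_continuous)
  then show ?thesis
    using assms(2) by (simp add: cbox_Pair_eq mult.commute)
qed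

lemma integrable_on_strip_rectangle:
  fixes g :: "real \<times> real \<Rightarrow> real"
  assumes "continuous_on (UNIV \<times> {-\<rho>..\<rho>}) g"
  shows "g integrable_on {0..2*pi} \<times> {-\<rho>..\<rho>}"
proof -
  have "{0..2*pi} \<times> {-\<rho>..\<rho>} = cbox (0, -\<rho>) (2*pi, \<rho>)"
    by (simp add: cbox_Pair_eq)
  then show ?thesis
    using integrable_continuous continuous_on_subset[OF assms] by (metis subset_UNIV Sigma_mono order_refl)
qed

lemma continuous_on_strip_fibre:
  fixes f :: "real \<times> real \<Rightarrow> real"
  assumes "continuous_on (UNIV \<times> {-\<rho>..\<rho>}) f" and "s \<in> {-\<rho>..\<rho>}"
  shows "continuous_on A (\<lambda>\<theta>. K * f (\<theta>, s))"
proof -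
  have "continuous_on A (\<lambda>\<theta>. f (\<theta>, s))"
    by (rule continuous_on_compose2[OF assms(1) continuous_on_Pair[OF continuous_on_id continuous_on_const]])
       (use assms(2) in auto)
  then show ?thesis by (rule continuous_on_mult_left)
qed

lemma integral_strip_rectangle_fibre:
  fixes f :: "real \<times> real \<Rightarrow> real"
  assumes "continuous_on (UNIV \<times> {-\<rho>..\<rho>}) f" and "s \<in> {-\<rho>..\<rho>}"
  shows "(\<lambda>z. K * f (fst z, s)) integrable_on {0..2*pi} \<times> {-\<rho>..\<rho>}"
    and "integral ({0..2*pi} \<times> {-\<rho>..\<rho>}) (\<lambda>z. K * f (fst z, s)) = 2 * \<rho> * K * curve_length f s"
proof -
  have fibre: "continuous_on A (\<lambda>\<theta>. K * f (\<theta>, s))" for A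
    using continuous_on_strip_fibre[OF assms] .
  show "(\<lambda>z. K * f (fst z, s)) integrable_on {0..2*pi} \<times> {-\<rho>..\<rho>}"
    by (rule integrable_on_strip_rectangle, rule continuous_on_compose2[OF fibre])
       (auto intro: continuous_on_fst)
  show "integral ({0..2*pi} \<times> {-\<rho>..\<rho>}) (\<lambda>z. K * f (fst z, s)) = 2 * \<rho> * K * curve_length f s"
    using integral_rectangle_fst[OF fibre, of "-\<rho>" \<rho>] assms(2)
    by (simp add: curve_length_def)
qed

lemma area_le_curve_length:
  assumes cont: "continuous_on (UNIV \<times> {-\<rho>..\<rho>}) f" and s: "s \<in> {-\<rho>..\<rho>}"
    and le: "\<And>\<theta> \<sigma>. \<sigma> \<in> {-\<rho>..\<rho>} \<Longrightarrow> f (\<theta>, \<sigma>) \<le> K * f (\<theta>, s)"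
  shows "area \<rho> f \<le> 2 * \<rho> * K * curve_length f s"
proof -
  have "area \<rho> f \<le> integral ({0..2*pi} \<times> {-\<rho>..\<rho>}) (\<lambda>z. K * f (fst z, s))"
    unfolding area_def
    by (rule integral_le[OF integrable_on_strip_rectangle[OF cont] integral_strip_rectangle_fibre(1)[OF cont s]])
       (use le in auto)
  also have "\<dots> = 2 * \<rho> * K * curve_length f s"
    by (rule integral_strip_rectangle_fibre(2)[OF cont s])
  finally show ?thesis .
qed

lemma curve_length_le_area:
  assumes cont: "continuous_on (UNIV \<times> {-\<rho>..\<rho>}) f" and s: "s \<in> {-\<rho>..\<rho>}"
    and le: "\<And>\<theta> \<sigma>. \<sigma> \<in> {-\<rho>..\<rho>} \<Longrightarrow> K * f (\<theta>, s) \<le> f (\<theta>, \<sigma>)"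
  shows "2 * \<rho> * K * curve_length f s \<le> area \<rho> f"
proof -
  have "2 * \<rho> * K * curve_length f s = integral ({0..2*pi} \<times> {-\<rho>..\<rho>}) (\<lambda>z. K * f (fst z, s))"
    by (rule integral_strip_rectangle_fibre(2)[OF cont s, symmetric])
  also have "\<dots> \<le> area \<rho> f"
    unfolding area_def
    by (rule integral_le[OF integral_strip_rectangle_fibre(1)[OF cont s] integrable_on_strip_rectangle[OF cont]])
       (use le in auto)
  finally show ?thesis .
qed

lemma strip_fibre_comparison:
  fixes f :: "real \<times> real \<Rightarrow> real"
  assumes smooth: "smooth_on_strip \<rho> f"
    and pos: "\<And>\<theta> \<sigma>. \<sigma> \<in> {-\<rho>..\<rho>} \<Longrightarrow> f (\<theta>, \<sigma>) > 0"
    and alpha: "\<alpha> \<ge> 0"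
    and curv: "\<And>\<theta> \<sigma>. \<sigma> \<in> {-\<rho>..\<rho>} \<Longrightarrow> scal_curv f (\<theta>, \<sigma>) \<ge> - \<alpha>"
    and geod: "\<And>\<theta> \<sigma>. \<sigma> \<in> {-\<rho>, \<rho>} \<Longrightarrow> \<bar>geod_curv f (\<theta>, \<sigma>)\<bar> \<le> C"
    and s: "s \<in> {-\<rho>, \<rho>}" and \<sigma>: "\<sigma> \<in> {-\<rho>..\<rho>}"
  shows "f (\<theta>, \<sigma>) \<le> exp (2 * \<rho> * (\<alpha> * \<rho> + C)) * f (\<theta>, s)"
    and "exp (- 2 * \<rho> * (\<alpha> * \<rho> + C)) * f (\<theta>, s) \<le> f (\<theta>, \<sigma>)"
proof -
  let ?K = "2 * \<rho> * (\<alpha> * \<rho> + C)"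
  have s': "s \<in> {-\<rho>..\<rho>}" using s \<sigma> by auto
  have "C \<ge> 0" using geod[OF s, of \<theta>] by linarith
  have subsolution: "pd2 (pd2 f) (\<theta>, t) \<le> \<alpha> / 2 * f (\<theta>, t)" if "t \<in> {-\<rho>..\<rho>}" for t
    using curv[OF that, of \<theta>] pos[OF that, of \<theta>] by (simp add: scal_curv_def divide_le_eq)
  have growth: "f (\<theta>, y) \<le> f (\<theta>, x) * exp ?K" if x: "x \<in> {-\<rho>..\<rho>}" and y: "y \<in> {-\<rho>..\<rho>}" for x y
  proof -
    have "f (\<theta>, y) \<le> f (\<theta>, x) * exp ((C + \<alpha> / 2 * (\<rho> - - \<rho>)) * \<bar>y - x\<bar>)"
      by (rule positive_subsolution_growth_bound[where h = "\<lambda>t. f (\<theta>, t)",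
            OF smooth_on_strip_has_pd2_derivatives(1)[OF smooth]
            smooth_on_strip_has_pd2_derivatives(2)[OF smooth] pos subsolution _ _ _ x y])
         (use alpha geod in \<open>auto simp: geod_curv_def\<close>)
    also have "\<dots> \<le> f (\<theta>, x) * exp ?K"
    proof -
      have "(C + \<alpha> * \<rho>) * \<bar>y - x\<bar> \<le> (C + \<alpha> * \<rho>) * (2 * \<rho>)"
        using \<open>C \<ge> 0\<close> alpha x y by (intro mult_left_mono) auto
      then show ?thesis
        using pos[OF x, of \<theta>] by (simp add: algebra_simps)
    qed
    finally show ?thesis .
  qed
  show "f (\<theta>, \<sigma>) \<le> exp ?K * f (\<theta>, s)"
    using growth[OF s' \<sigma>] by (simp add: mult.commute)
  have "exp (- 2 * \<rho> * (\<alpha> * \<rho> + C)) * f (\<theta>, s)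
      \<le> exp (- 2 * \<rho> * (\<alpha> * \<rho> + C)) * (f (\<theta>, \<sigma>) * exp ?K)"
    using growth[OF \<sigma> s'] by (rule mult_left_mono) simp
  also have "\<dots> = f (\<theta>, \<sigma>)"
    by (simp add: mult.left_commute flip: exp_add)
  finally show "exp (- 2 * \<rho> * (\<alpha> * \<rho> + C)) * f (\<theta>, s) \<le> f (\<theta>, \<sigma>)" .
qed

theorem lemma2p3:
  fixes f :: "real \<times> real \<Rightarrow> real" and \<rho> \<alpha> C L :: real
  assumes rho_pos: "\<rho> > 0"
    and smooth: "smooth_on_strip \<rho> f"
    and periodic: "\<And>\<theta> \<sigma>. f (\<theta> + 2*pi, \<sigma>) = f (\<theta>, \<sigma>)"
    and pos: "\<And>\<theta> \<sigma>. \<sigma> \<in> {-\<rho>..\<rho>} \<Longrightarrow> f (\<theta>, \<sigma>) > 0"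
    and alpha: "\<alpha> > 0" and C: "C \<ge> 0"
    and curv: "\<And>\<theta> \<sigma>. \<sigma> \<in> {-\<rho>..\<rho>} \<Longrightarrow> scal_curv f (\<theta>, \<sigma>) \<ge> - \<alpha>"
    and geod: "\<And>\<theta> \<sigma>. \<sigma> \<in> {-\<rho>, \<rho>} \<Longrightarrow> \<bar>geod_curv f (\<theta>, \<sigma>)\<bar> \<le> C"
    and L: "L = min (curve_length f (-\<rho>)) (curve_length f \<rho>)"
  shows "2 * \<rho> * L * exp (- 2 * \<rho> * (\<alpha> * \<rho> + C)) \<le> area \<rho> f
       \<and> area \<rho> f \<le> 2 * \<rho> * L * exp (2 * \<rho> * (\<alpha> * \<rho> + C))"
proof -
  have cont: "continuous_on (UNIV \<times> {-\<rho>..\<rho>}) f"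
    by (rule smooth_on_strip_continuous_on[OF smooth])
  have comparison:
    "f (\<theta>, \<sigma>) \<le> exp (2 * \<rho> * (\<alpha> * \<rho> + C)) * f (\<theta>, s)"
    "exp (- 2 * \<rho> * (\<alpha> * \<rho> + C)) * f (\<theta>, s) \<le> f (\<theta>, \<sigma>)"
    if "s \<in> {-\<rho>, \<rho>}" and "\<sigma> \<in> {-\<rho>..\<rho>}" for \<theta> s \<sigma>
    using alpha by (intro strip_fibre_comparison[OF smooth _ _ curv geod that] pos; simp)+
  have upper: "area \<rho> f \<le> 2 * \<rho> * exp (2 * \<rho> * (\<alpha> * \<rho> + C)) * curve_length f s"
    if "s \<in> {-\<rho>, \<rho>}" for s
    by (rule area_le_curve_length[OF cont]) (use that rho_pos comparison(1) in auto)
  have lower: "2 * \<rho> * exp (- 2 * \<rho> * (\<alpha> * \<rho> + C)) * curve_length f s \<le> area \<rho> f"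
    if "s \<in> {-\<rho>, \<rho>}" for s
    by (rule curve_length_le_area[OF cont]) (use that rho_pos comparison(2) in auto)
  show ?thesis
    using upper[of \<rho>] upper[of "-\<rho>"] lower[of \<rho>] lower[of "-\<rho>"] L
    by (auto simp: min_def mult_ac)
qed

end
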